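(* Let $S' \subset \mathbb{R}^j$ be a subset of a Euclidean space. Then for all positive integers $k$ and all $m\geq 2$, we have \[\mathrm{Tv}(S' \times \mathbb{R}^k, m) \leq \mathrm{Tv}(S' , \mathrm{Tv}(\mathbb{R}^k,m)).\]
   Context: For $S\subseteq\mathbb{R}^d$ and an integer $m\geq 2$, the Tverberg number $\mathrm{Tv}(S,m)$ is the smallest positive integer $n$ such that any multiset of $n$ points in $S$ admits a partition into $m$ submultisets $A_1,\dots,A_m$ with $\left(\bigcap_{i=1}^m\mathrm{conv}(A_i)\right)\cap S\neq\varnothing$ (and $\mathrm{Tv}(S,m)=\infty$ if no such number exists). *)

theory Defs
  imports "HOL-Analysis.Analysis" "HOL-Library.Multiset" "HOL-Library.Extended_Nat"
begin

definition tverberg_partitionable :: "'a::real_vector set \<Rightarrow> nat \<Rightarrow> 'a multiset \<Rightarrow> bool" where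
  "tverberg_partitionable S m M \<longleftrightarrow>
     (\<exists>A :: nat \<Rightarrow> 'a multiset. (\<Sum>i<m. A i) = M \<and>
        (\<Inter>i<m. convex hull (set_mset (A i))) \<inter> S \<noteq> {})"

definition tverberg_prop :: "'a::real_vector set \<Rightarrow> nat \<Rightarrow> nat \<Rightarrow> bool" where
  "tverberg_prop S m n \<longleftrightarrow>
     (\<forall>M. size M = n \<and> set_mset M \<subseteq> S \<longrightarrow> tverberg_partitionable S m M)"

definition Tv :: "'a::real_vector set \<Rightarrow> nat \<Rightarrow> enat" where
  "Tv S m = (if \<exists>n. 0 < n \<and> tverberg_prop S m n
             then enat (LEAST n. 0 < n \<and> tverberg_prop S m n) else \<infinity>)"

end

theory Submission
  imports Defs
begin

text \<open>Given M in S' x R^k, partition the first coordinates of M by a Tverberg partition of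
  S' into t = Tv(R^k, m) parts with Tverberg point p. Each part contains a point z_i of
  the fibre over p in its convex hull. A Tverberg partition of the second coordinates of
  z_0, ..., z_(t-1) into m groups, with Tverberg point q, merges the t parts into m parts
  whose convex hulls all contain (p, q).\<close>

lemma image_mset_eq_sum_liftE:
  fixes m :: nat
  assumes "image_mset f N = (\<Sum>i<m. A i)"
  obtains B where "(\<Sum>i<m. B i) = N" "\<forall>i<m. image_mset f (B i) = A i"
  using assms
proof (induction m arbitrary: N thesis)
  case 0
  then show ?case by auto
next
  case (Suc m)
  from Suc.prems(2) have "image_mset f N = (\<Sum>i<m. A i) + A m" by simp
  then obtain N1 N2
    where N: "N = N1 + N2" "image_mset f N1 = (\<Sum>i<m. A i)" "image_mset f N2 = A m"
    by (metis image_mset_eq_plusD)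
  obtain B where B: "(\<Sum>i<m. B i) = N1" "\<forall>i<m. image_mset f (B i) = A i"
    using Suc.IH[OF _ N(2)] by blast
  have "(\<Sum>i<m. (B(m := N2)) i) = (\<Sum>i<m. B i)" by (rule sum.cong) auto
  then show ?case
    using Suc.prems(1)[of "B(m := N2)"] B N by (auto simp: less_Suc_eq)
qed

lemma Tv_eq_enatD:
  assumes "Tv S m = enat n"
  shows "0 < n" "tverberg_prop S m n"
proof -
  have ex: "\<exists>n. 0 < n \<and> tverberg_prop S m n"
    using assms unfolding Tv_def by (auto split: if_splits)
  then have "n = (LEAST n. 0 < n \<and> tverberg_prop S m n)"
    using assms unfolding Tv_def by auto
  then show "0 < n" "tverberg_prop S m n"
    using LeastI_ex[OF ex] by auto
qed

lemma Tv_le_enatI: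
  assumes "0 < n" "tverberg_prop S m n"
  shows "Tv S m \<le> enat n"
  using assms Least_le[of "\<lambda>n. 0 < n \<and> tverberg_prop S m n" n] unfolding Tv_def by auto

lemma Pair_in_convex_hull_fibre:
  fixes Z :: "('a::real_vector \<times> 'b::real_vector) set"
  assumes "fst ` Z \<subseteq> {p}" "q \<in> convex hull (snd ` Z)"
  shows "(p, q) \<in> convex hull Z"
proof -
  have "q \<in> snd ` (convex hull Z)"
    using assms(2) convex_hull_linear_image[OF linear_snd] by metis
  then obtain w where w: "w \<in> convex hull Z" "snd w = q" by auto
  have "convex {w :: 'a \<times> 'b. fst w = p}"
    unfolding convex_def by (auto simp: algebra_simps scaleR_add_left[symmetric])
  moreover have "Z \<subseteq> {w. fst w = p}" using assms(1) by auto
  ultimately have "convex hull Z \<subseteq> {w. fst w = p}" by (rule hull_minimal[rotated])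
  then have "fst w = p" using w(1) by auto
  then show ?thesis using w by (metis prod.collapse)
qed

lemma mem_summand_mset_set_lessThan:
  fixes m t :: nat
  assumes "(\<Sum>j<m. N j) = mset_set {..<t}" "j < m" "i \<in># N j"
  shows "i < t"
proof -
  have "N j \<subseteq># mset_set {..<t}"
    using assms(1,2) by (metis sum.remove finite_lessThan lessThan_iff mset_subset_eq_add_left)
  then show ?thesis
    using assms(3) by (metis finite_lessThan finite_set_mset_mset_set lessThan_iff mset_subset_eqD)
qed

lemma sum_mset_image_mset_partition:
  fixes m t :: nat
  assumes "(\<Sum>j<m. N j) = mset_set {..<t}"
  shows "(\<Sum>j<m. sum_mset (image_mset Mi (N j))) = (\<Sum>i<t. Mi i)"
proof -
  have "(\<Sum>j<m. sum_mset (image_mset Mi (N j))) = sum_mset (image_mset Mi (\<Sum>j<m. N j))"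
    by (induction m) auto
  also have "\<dots> = (\<Sum>i<t. Mi i)" using assms by (simp add: sum_unfold_sum_mset)
  finally show ?thesis .
qed

lemma subset_mset_sum_mset_image_mset:
  assumes "x \<in># X"
  shows "f x \<subseteq># sum_mset (image_mset f X)"
proof -
  obtain X' where "X = add_mset x X'" using assms by (blast dest: multi_member_split)
  then show ?thesis by simp
qed

lemma merge_partition_convex_hull:
  fixes m t :: nat
  assumes parts: "(\<Sum>i<t. Mi i) = M" "\<And>i. i < t \<Longrightarrow> z i \<in> convex hull (set_mset (Mi i))"
    and groups: "(\<Sum>j<m. N j) = mset_set {..<t}"
    and x: "\<And>j. j < m \<Longrightarrow> x \<in> convex hull (z ` set_mset (N j))"
  shows "\<exists>A. (\<Sum>j<m. A j) = M \<and> (\<forall>j<m. x \<in> convex hull (set_mset (A j)))"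
proof (intro exI conjI allI impI)
  define A where "A j = sum_mset (image_mset Mi (N j))" for j
  show "(\<Sum>j<m. A j) = M"
    unfolding A_def using sum_mset_image_mset_partition[OF groups, of Mi] parts(1) by simp
  fix j assume "j < m"
  note index = mem_summand_mset_set_lessThan[OF groups \<open>j < m\<close>]
  have "z ` set_mset (N j) \<subseteq> convex hull (set_mset (A j))"
  proof
    fix y assume "y \<in> z ` set_mset (N j)"
    then obtain i where i: "i \<in># N j" "y = z i" by auto
    have "set_mset (Mi i) \<subseteq> set_mset (A j)"
      unfolding A_def using subset_mset_sum_mset_image_mset[OF i(1)] by (rule set_mset_mono)
    then show "y \<in> convex hull (set_mset (A j))"
      using parts(2)[OF index[OF i(1)]] i(2) hull_mono by blast
  qed
  then show "x \<in> convex hull (set_mset (A j))"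
    using x[OF \<open>j < m\<close>] by (metis convex_convex_hull hull_minimal subsetD)
qed

lemma tverberg_partitionable_product:
  fixes M :: "('a::real_vector \<times> 'b::real_vector) multiset"
  assumes first: "tverberg_partitionable S t (image_mset fst M)"
    and second: "tverberg_prop (UNIV :: 'b set) m t"
  shows "tverberg_partitionable (S \<times> UNIV) m M"
proof -
  obtain Bp p where Bp: "(\<Sum>i<t. Bp i) = image_mset fst M"
    and p: "p \<in> S" "\<And>i. i < t \<Longrightarrow> p \<in> convex hull (set_mset (Bp i))"
    using first unfolding tverberg_partitionable_def by blast
  obtain Mi where Mi: "(\<Sum>i<t. Mi i) = M" "\<forall>i<t. image_mset fst (Mi i) = Bp i"
    using image_mset_eq_sum_liftE[OF Bp(1)[symmetric]] by blast
  have "\<exists>y \<in> convex hull (set_mset (Mi i)). fst y = p" if "i < t" for i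
  proof -
    have "p \<in> convex hull (fst ` set_mset (Mi i))"
      using p(2)[OF that] Mi(2) that by (metis set_image_mset)
    then show ?thesis using convex_hull_linear_image[OF linear_fst] by (metis imageE)
  qed
  then obtain z where z_hull: "\<And>i. i < t \<Longrightarrow> z i \<in> convex hull (set_mset (Mi i))"
    and z_fst: "\<And>i. i < t \<Longrightarrow> fst (z i) = p"
    by metis
  define Y where "Y = image_mset (\<lambda>i. snd (z i)) (mset_set {..<t})"
  have "tverberg_partitionable (UNIV :: 'b set) m Y"
    using second unfolding tverberg_prop_def Y_def by simp
  then obtain C q where C: "(\<Sum>j<m. C j) = Y"
    and q: "\<And>j. j < m \<Longrightarrow> q \<in> convex hull (set_mset (C j))"
    unfolding tverberg_partitionable_def by blast
  obtain N where N: "(\<Sum>j<m. N j) = mset_set {..<t}"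
    "\<forall>j<m. image_mset (\<lambda>i. snd (z i)) (N j) = C j"
    using image_mset_eq_sum_liftE[OF C[unfolded Y_def, symmetric]] by blast
  have "(p, q) \<in> convex hull (z ` set_mset (N j))" if "j < m" for j
  proof (rule Pair_in_convex_hull_fibre)
    have "i < t" if "i \<in># N j" for i
      using mem_summand_mset_set_lessThan[OF N(1) \<open>j < m\<close> that] .
    then show "fst ` z ` set_mset (N j) \<subseteq> {p}" using z_fst by auto
    show "q \<in> convex hull (snd ` z ` set_mset (N j))"
      using q[OF that] N(2) that by (metis set_image_mset image_image)
  qed
  then obtain A where A: "(\<Sum>j<m. A j) = M" "\<forall>j<m. (p, q) \<in> convex hull (set_mset (A j))"
    using merge_partition_convex_hull[OF Mi(1) z_hull N(1)] by blast
  then have "(p, q) \<in> (\<Inter>j<m. convex hull (set_mset (A j))) \<inter> (S \<times> UNIV)"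
    using p(1) by blast
  with A(1) show ?thesis
    unfolding tverberg_partitionable_def by blast
qed

lemma tverberg_prop_product:
  assumes "tverberg_prop S t n" "tverberg_prop (UNIV :: 'b::real_vector set) m t"
  shows "tverberg_prop (S \<times> (UNIV :: 'b set)) m n"
  unfolding tverberg_prop_def
proof (intro allI impI)
  fix M :: "('a \<times> 'b) multiset"
  assume "size M = n \<and> set_mset M \<subseteq> S \<times> UNIV"
  then have "size (image_mset fst M) = n \<and> set_mset (image_mset fst M) \<subseteq> S"
    by auto
  then have "tverberg_partitionable S t (image_mset fst M)"
    using assms(1) unfolding tverberg_prop_def by blast
  then show "tverberg_partitionable (S \<times> UNIV) m M"
    using tverberg_partitionable_product assms(2) by blast
qed

theorem theorem3:
  fixes S' :: "(real ^ 'j) set"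
  assumes "m \<ge> 2"
  shows "Tv (S' \<times> (UNIV :: (real ^ 'k) set)) m \<le>
           (case Tv (UNIV :: (real ^ 'k) set) m of enat t \<Rightarrow> Tv S' t | \<infinity> \<Rightarrow> \<infinity>)"
proof (cases "Tv (UNIV :: (real ^ 'k) set) m")
  case (enat t)
  note Tv_second = this
  show ?thesis
  proof (cases "Tv S' t")
    case (enat n)
    have "tverberg_prop (S' \<times> (UNIV :: (real ^ 'k) set)) m n"
      using tverberg_prop_product[OF Tv_eq_enatD(2)[OF enat] Tv_eq_enatD(2)[OF Tv_second]] .
    then have "Tv (S' \<times> (UNIV :: (real ^ 'k) set)) m \<le> enat n"
      using Tv_le_enatI Tv_eq_enatD(1)[OF enat] by blast
    then show ?thesis
      using Tv_second enat by simp
  next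
    case infinity
    then show ?thesis
      using Tv_second by simp
  qed
next
  case infinity
  then show ?thesis by simp
qed

end
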